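(* Let $X=(X_1,\dots,X_d)$ be a random vector with values in $\{0,1\}^d$ such that $\mathbb{P}(X=x)>0$ for every $x\in\{0,1\}^d$. For $A\subseteq D:=\{1,\dots,d\}$ let $e_A(X_A):=\dfrac{(-1)^{\sum_{j\in A}X_j}}{\mathbf{P}_A(X_A)}$, with $e_\emptyset(X_\emptyset)=1$. Then for all $A,B\subseteq D$ with $B\subsetneq A$, $\mathbb{E}[e_A(X_A)e_B(X_B)]=0$.
   Context: $X_A:=(X_i)_{i\in A}$ and $\mathbf{P}_A(x_A):=\mathbb{P}(X_A=x_A)$ is its probability mass function. *)

theory Defs
  imports "HOL-Probability.Probability"
begin

text \<open>A random vector X = (X_1,...,X_d) with values in {0,1}^d is modelled by its
  distribution, a pmf p on functions x :: nat => nat; outcomes lie in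
  PiE {1..d} (\<lambda>_. {0,1}) (value undefined outside {1..d}).\<close>

definition cube :: "nat \<Rightarrow> (nat \<Rightarrow> nat) set" where
  "cube d = PiE {1..d} (\<lambda>_. {0, 1})"

definition marg :: "(nat \<Rightarrow> nat) pmf \<Rightarrow> nat set \<Rightarrow> (nat \<Rightarrow> nat) \<Rightarrow> real" where
  "marg p A x = measure_pmf.prob p {y. \<forall>j\<in>A. y j = x j}"

definition eA :: "(nat \<Rightarrow> nat) pmf \<Rightarrow> nat set \<Rightarrow> (nat \<Rightarrow> nat) \<Rightarrow> real" where
  "eA p A x = (if A = {} then 1 else (-1) ^ (\<Sum>j\<in>A. x j) / marg p A x)"

end

theory Submission
  imports Defs
begin

text \<open>The product \<open>e_A e_B\<close> is a function of \<open>X_A\<close> divided by the mass \<open>P_A(X_A)\<close>,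
  so its expectation is the plain sum of \<open>(-1)^(\<Sum>j\<in>A. x_j) e_B(x_B)\<close> over the support
  \<open>{0,1}^A\<close> of \<open>X_A\<close>. Flipping a coordinate \<open>j \<in> A - B\<close> is a fixed-point-free
  involution of \<open>{0,1}^A\<close> that changes the sign and leaves \<open>e_B\<close> unchanged, so the
  sum vanishes.\<close>

definition marg_pmf :: "('i \<Rightarrow> 'a) pmf \<Rightarrow> 'i set \<Rightarrow> ('i \<Rightarrow> 'a) pmf" where
  "marg_pmf p A = map_pmf (\<lambda>x. restrict x A) p"

lemma marg_eq_pmf_marg_pmf: "marg p A x = pmf (marg_pmf p A) (restrict x A)"
  unfolding marg_def marg_pmf_def pmf_map
  by (rule arg_cong[where f = "measure_pmf.prob p"]) (auto simp: fun_eq_iff, metis restrict_apply')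

lemma eA_cong: "(\<And>i. i \<in> A \<Longrightarrow> x i = y i) \<Longrightarrow> eA p A x = eA p A y"
  unfolding eA_def marg_def by (simp cong: sum.cong)

lemma image_restrict_PiE:
  assumes "A \<subseteq> I" and "\<And>i. i \<in> I - A \<Longrightarrow> F i \<noteq> {}"
  shows "(\<lambda>x. restrict x A) ` PiE I F = PiE A F"
proof
  show "(\<lambda>x. restrict x A) ` PiE I F \<subseteq> PiE A F"
    using assms(1) by (auto simp: restrict_PiE_iff PiE_iff)
  show "PiE A F \<subseteq> (\<lambda>x. restrict x A) ` PiE I F"
  proof
    fix a assume a: "a \<in> PiE A F"
    define x where "x = (\<lambda>i. if i \<in> A then a i else if i \<in> I then SOME t. t \<in> F i else undefined)"
    have "x \<in> PiE I F"
      using a assms by (auto simp: x_def PiE_iff extensional_def some_in_eq)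
    moreover have "restrict x A = a"
      using a by (auto simp: x_def fun_eq_iff PiE_iff extensional_def)
    ultimately show "a \<in> (\<lambda>x. restrict x A) ` PiE I F" by force
  qed
qed

lemma expectation_divide_pmf:
  fixes g :: "'a \<Rightarrow> real"
  assumes "finite (set_pmf q)"
  shows "measure_pmf.expectation q (\<lambda>a. g a / pmf q a) = (\<Sum>a\<in>set_pmf q. g a)"
proof -
  have "measure_pmf.expectation q (\<lambda>a. g a / pmf q a) = (\<Sum>a\<in>set_pmf q. g a / pmf q a * pmf q a)"
    using assms by (rule integral_measure_pmf_real)
  also have "\<dots> = (\<Sum>a\<in>set_pmf q. g a)"
    by (rule sum.cong) (auto simp: set_pmf_eq)
  finally show ?thesis .
qed

lemma sum_PiE_sign_eq_0:
  fixes h :: "('i \<Rightarrow> nat) \<Rightarrow> 'a :: ring_1"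
  assumes "finite A" and "j \<in> A" and h: "\<And>x t. h (x(j := t)) = h x"
  shows "(\<Sum>a\<in>PiE A (\<lambda>_. {0, 1}). (-1) ^ (\<Sum>i\<in>A. a i) * h a) = 0"
proof (rule sum_involution_eq_0)
  let ?flip = "\<lambda>a :: 'i \<Rightarrow> nat. a(j := 1 - a j)"
  fix a :: "'i \<Rightarrow> nat" assume a: "a \<in> PiE A (\<lambda>_. {0, 1})"
  have "(\<Sum>i\<in>A - {j}. ?flip a i) = (\<Sum>i\<in>A - {j}. a i)"
    by (rule sum.cong) auto
  then have "(\<Sum>i\<in>A. ?flip a i) = (\<Sum>i\<in>A - {j}. a i) + (1 - a j)"
    using assms(1,2) by (simp add: sum.remove)
  moreover have "(\<Sum>i\<in>A. a i) = (\<Sum>i\<in>A - {j}. a i) + a j"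
    using assms(1,2) by (simp add: sum.remove)
  moreover have "a j \<in> {0, 1}"
    using a assms(2) by auto
  ultimately show "(-1) ^ (\<Sum>i\<in>A. ?flip a i) * h (?flip a) + (-1) ^ (\<Sum>i\<in>A. a i) * h a = 0"
    using h[of a] by (auto simp: power_add)
  show "?flip a \<in> PiE A (\<lambda>_. {0, 1})" "?flip (?flip a) = a" "?flip a \<noteq> a"
    using a assms(2) by (auto simp: PiE_iff extensional_def fun_eq_iff)
qed

theorem proposition3:
  fixes d :: nat and p :: "(nat \<Rightarrow> nat) pmf" and A B :: "nat set"
  assumes "set_pmf p \<subseteq> cube d"
    and "\<forall>x\<in>cube d. pmf p x > 0"
    and "A \<subseteq> {1..d}" and "B \<subset> A"
  shows "measure_pmf.expectation p (\<lambda>x. eA p A x * eA p B x) = 0"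
proof -
  obtain j where j: "j \<in> A" "j \<notin> B"
    using assms(4) by auto
  have "finite A"
    using assms(3) finite_subset by blast
  define q where "q = marg_pmf p A"
  define g where "g a = (-1) ^ (\<Sum>i\<in>A. a i) * eA p B a" for a
  have "set_pmf p = cube d"
    using assms(1,2) by (auto simp: set_pmf_eq)
  then have set_q: "set_pmf q = PiE A (\<lambda>_. {0, 1})"
    using assms(3) by (simp add: q_def marg_pmf_def cube_def image_restrict_PiE)
  have "eA p A x * eA p B x = g (restrict x A) / pmf q (restrict x A)" for x
  proof -
    have "eA p B (restrict x A) = eA p B x"
      using assms(4) by (intro eA_cong) auto
    then show ?thesis
      using j(1) by (auto simp: eA_def[of p A] g_def q_def marg_eq_pmf_marg_pmf)
  qed
  then have "measure_pmf.expectation p (\<lambda>x. eA p A x * eA p B x)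
      = measure_pmf.expectation q (\<lambda>a. g a / pmf q a)"
    by (simp add: q_def marg_pmf_def)
  also have "\<dots> = (\<Sum>a\<in>PiE A (\<lambda>_. {0, 1}). g a)"
    using expectation_divide_pmf[of q g] set_q \<open>finite A\<close> by (simp add: finite_PiE)
  also have "\<dots> = 0"
    unfolding g_def using \<open>finite A\<close> j by (intro sum_PiE_sign_eq_0) (auto intro: eA_cong)
  finally show ?thesis .
qed

end
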